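(* Let $p$ be a prime and let $f:\mathbb{Z}_p\times\mathbb{Z}_p\to\mathbb{Z}_p$ be additively inseparable. Write $f(x,y)=\sum_{i,j=0}^{p-1}\lambda_{i,j}x^iy^j$ with $\lambda_{i,j}\in\mathbb{Z}_p$. Then $\Delta(f)\ge 2$. Moreover, $2^{\Delta(f)-2}$ copies of $P^f$, together with local processing and without communication, suffice to simulate one copy of $PR_p$ exactly.
   Context: Let $p$ be a prime. All arithmetic on elements of $\mathbb{Z}_p$ is modulo $p$. A box is a conditional probability distribution $P(a,b\mid x,y)$ with $a,b,x,y\in\mathbb{Z}_p$. It is shared by Alice, who supplies $x$ and receives $a$, and Bob, who supplies $y$ and receives $b$. Different copies act independently. $PR_p(a,b\mid x,y)=1/p$ if $a-b=xy$, and $0$ otherwise. For $f:\mathbb{Z}_p\times\mathbb{Z}_p\to\mathbb{Z}_p$, the functional box is $P^f(a,b\mid x,y)=1/p$ if $a-b=f(x,y)$, and $0$ otherwise. A function $f$ is additively separable if $f(x,y)=g(x)+h(y)$ for some $g,h:\mathbb{Z}_p\to\mathbb{Z}_p$. Otherwise it is additively inseparable. Every $f$ has a unique representation $f(x,y)=\sum_{i,j=0}^{p-1}\lambda_{i,j}x^iy^j$. Define $$\Delta(f)=\max_{1\le i,j\le p-1}\mathbb{I}_{\lambda_{i,j}\neq0}\,(i+j),$$ the maximal total degree of a monomial with nonzero coefficient that is divisible by $xy$. It is $0$ if there is no such monomial. *)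

theory Defs
  imports Complex_Main "HOL-Library.FuncSet" "Berlekamp_Zassenhaus.Finite_Field"
begin

text \<open>Z_p is modelled by the type 'p mod_ring with 'p :: prime_card, i.e. CARD('p) = p is prime.\<close>

type_synonym 'p box = "'p mod_ring \<Rightarrow> 'p mod_ring \<Rightarrow> 'p mod_ring \<Rightarrow> 'p mod_ring \<Rightarrow> real"
  (* P a b x y  =  P(a,b | x,y) *)

definition PR_box :: "('p::prime_card) box" where
  "PR_box a b x y = (if a - b = x * y then 1 / real CARD('p) else 0)"

definition functional_box ::
  "('p::prime_card mod_ring \<Rightarrow> 'p mod_ring \<Rightarrow> 'p mod_ring) \<Rightarrow> 'p box" where
  "functional_box f a b x y = (if a - b = f x y then 1 / real CARD('p) else 0)"

definition additively_separable ::
  "('p::prime_card mod_ring \<Rightarrow> 'p mod_ring \<Rightarrow> 'p mod_ring) \<Rightarrow> bool" where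
  "additively_separable f \<longleftrightarrow> (\<exists>g h. \<forall>x y. f x y = g x + h y)"

definition is_poly_rep ::
  "('p::prime_card mod_ring \<Rightarrow> 'p mod_ring \<Rightarrow> 'p mod_ring) \<Rightarrow> (nat \<Rightarrow> nat \<Rightarrow> 'p mod_ring) \<Rightarrow> bool" where
  "is_poly_rep f lam \<longleftrightarrow>
     (\<forall>i j. (CARD('p) \<le> i \<or> CARD('p) \<le> j) \<longrightarrow> lam i j = 0) \<and>
     (\<forall>x y. f x y = (\<Sum>i<CARD('p). \<Sum>j<CARD('p). lam i j * x ^ i * y ^ j))"

definition poly_coeffs ::
  "('p::prime_card mod_ring \<Rightarrow> 'p mod_ring \<Rightarrow> 'p mod_ring) \<Rightarrow> nat \<Rightarrow> nat \<Rightarrow> 'p mod_ring" where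
  "poly_coeffs f = (THE lam. is_poly_rep f lam)"

definition Delta :: "('p::prime_card mod_ring \<Rightarrow> 'p mod_ring \<Rightarrow> 'p mod_ring) \<Rightarrow> nat" where
  "Delta f = Max ({i + j | i j. 1 \<le> i \<and> i \<le> CARD('p) - 1 \<and> 1 \<le> j \<and> j \<le> CARD('p) - 1
                              \<and> poly_coeffs f i j \<noteq> 0} \<union> {0})"

text \<open>Simulation of box Q by k independent copies of box P with local processing and no
  communication: Alice maps her input x to inputs Ain x i for copies i < k and outputs
  Aout x (a_0,...,a_{k-1}); Bob likewise.\<close>
definition simulates_with :: "nat \<Rightarrow> ('p::prime_card) box \<Rightarrow> 'p box \<Rightarrow> bool" where
  "simulates_with k P Q \<longleftrightarrow>
    (\<exists>(Ain :: 'p mod_ring \<Rightarrow> nat \<Rightarrow> 'p mod_ring) (Bin :: 'p mod_ring \<Rightarrow> nat \<Rightarrow> 'p mod_ring)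
      (Aout :: 'p mod_ring \<Rightarrow> (nat \<Rightarrow> 'p mod_ring) \<Rightarrow> 'p mod_ring)
      (Bout :: 'p mod_ring \<Rightarrow> (nat \<Rightarrow> 'p mod_ring) \<Rightarrow> 'p mod_ring).
      \<forall>a b x y. Q a b x y =
        (\<Sum>av \<in> PiE {..<k} (\<lambda>_. UNIV). \<Sum>bv \<in> PiE {..<k} (\<lambda>_. UNIV).
           (\<Prod>i<k. P (av i) (bv i) (Ain x i) (Bin y i)) *
           (if Aout x av = a \<and> Bout y bv = b then 1 else 0)))"

end

theory Submission
  imports Defs "HOL-Computational_Algebra.Polynomial"
begin

(* Every f on Z_p x Z_p is a polynomial of degree < p in each variable. If f is inseparable it has
   a nonzero mixed coefficient, so Delta(f) = a + b for some a, b >= 1 with lambda_{a,b} nonzero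
   and no nonzero mixed coefficient of larger total degree. The forward differences
   D_x^(a-1) D_y^(b-1) turn every other mixed monomial into a function of x alone or of y alone,
   and x^a y^b into a! b! x y plus such functions; as a, b < p, the result is m x y + g x + h y
   with m nonzero. Expanding the differences, the same function is a combination of
   2^(Delta(f)-2) translates f(x + u_i, y + v_i) with nonzero coefficients c_i. Alice and Bob
   feed x + u_i and y + v_i into the copies of P^f and output (sum c_i a_i - g x) / m and
   (sum c_i b_i + h y) / m: the difference of the outputs is x y, and each output is uniform,
   which is exactly PR_p. *)

section \<open>Polynomial functions on finite fields\<close>

lemma card_finite_field_ge_2: "2 \<le> CARD('a::finite_field)"
proof -
  have "card {0, 1::'a} \<le> CARD('a)" by (rule card_mono) auto
  then show ?thesis by simp
qed

lemma finite_field_power_card_minus_1: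
  fixes x :: "'a::finite_field"
  assumes "x \<noteq> 0"
  shows "x ^ (CARD('a) - 1) = 1"
proof -
  have "x * x ^ (CARD('a) - 1) = x ^ CARD('a)"
    using card_finite_field_ge_2[where 'a='a] by (simp add: power_eq_if)
  then show ?thesis using finite_field_power_card_eq_same[of x] assms by simp
qed

lemma poly_eq_sum_lessThan:
  fixes p :: "'a::comm_semiring_1 poly"
  assumes "degree p < n"
  shows "poly p x = (\<Sum>i<n. coeff p i * x ^ i)"
  unfolding poly_altdef using assms
  by (intro sum.mono_neutral_left) (auto simp: coeff_eq_0)

lemma finite_field_fun_is_poly:
  fixes g :: "'a::finite_field \<Rightarrow> 'a"
  obtains Q where "degree Q < CARD('a)" "\<And>x. g x = poly Q x"
proof
  let ?q = "CARD('a)"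
  define Q where "Q = (\<Sum>a\<in>UNIV. smult (g a) (1 - [:-a, 1:] ^ (?q - 1)))"
  have "degree Q \<le> ?q - 1"
    unfolding Q_def
    by (intro degree_sum_le order.trans[OF degree_smult_le] order.trans[OF degree_diff_le])
       (auto intro: order.trans[OF degree_power_le])
  then show "degree Q < ?q" using card_finite_field_ge_2[where 'a='a] by simp
  have indicator: "1 - (x - a) ^ (?q - 1) = (if x = a then 1 else 0)" for x a :: 'a
    using finite_field_power_card_minus_1[of "x - a"] card_finite_field_ge_2[where 'a='a] by auto
  show "g x = poly Q x" for x
  proof -
    have "poly Q x = (\<Sum>a\<in>UNIV. g a * (1 - (x - a) ^ (?q - 1)))"
      by (simp add: Q_def poly_sum)
    also have "\<dots> = g x"
      unfolding indicator by (simp add: if_distrib cong: if_cong)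
    finally show ?thesis ..
  qed
qed

lemma finite_field_fun_coeffs:
  fixes g :: "'a::finite_field \<Rightarrow> 'a"
  shows "\<exists>c. \<forall>x. g x = (\<Sum>i<CARD('a). c i * x ^ i)"
proof -
  obtain Q where "degree Q < CARD('a)" "\<And>x. g x = poly Q x"
    using finite_field_fun_is_poly[of g] by blast
  then show ?thesis by (metis poly_eq_sum_lessThan)
qed

lemma finite_field_fun_coeffs_eq_0:
  fixes c :: "nat \<Rightarrow> 'a::finite_field"
  assumes zero: "\<And>x. (\<Sum>i<CARD('a). c i * x ^ i) = 0" and i: "i < CARD('a)"
  shows "c i = 0"
proof -
  define P where "P = (\<Sum>i<CARD('a). monom (c i) i)"
  have deg: "degree P < CARD('a)"
    unfolding P_def using card_finite_field_ge_2[where 'a='a]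
    by (intro degree_sum_less) (auto intro: le_less_trans[OF degree_monom_le])
  have roots: "{x. poly P x = 0} = UNIV"
    using zero by (simp add: P_def poly_sum poly_monom)
  have "P = 0"
  proof (rule ccontr)
    assume "P \<noteq> 0"
    then have "card {x. poly P x = 0} \<le> degree P" by (rule card_poly_roots_bound)
    with deg roots show False by simp
  qed
  then show ?thesis
    using i by (auto simp: P_def coeff_sum coeff_monom dest: arg_cong[where f="\<lambda>P. coeff P i"])
qed

lemma double_sum_coeffs_eq_0:
  fixes c :: "nat \<Rightarrow> nat \<Rightarrow> 'a::finite_field"
  assumes zero: "\<And>x y. (\<Sum>i<CARD('a). \<Sum>j<CARD('a). c i j * x ^ i * y ^ j) = 0"
    and "i < CARD('a)" "j < CARD('a)"
  shows "c i j = 0"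
proof -
  have "(\<Sum>i<CARD('a). (\<Sum>j<CARD('a). c i j * y ^ j) * x ^ i) = 0" for x y
    using zero[of x y] by (simp add: sum_distrib_left sum_distrib_right ac_simps)
  then have "(\<Sum>j<CARD('a). c i j * y ^ j) = 0" for y
    using finite_field_fun_coeffs_eq_0[of "\<lambda>i. \<Sum>j<CARD('a). c i j * y ^ j"] \<open>i < CARD('a)\<close> by blast
  then show ?thesis
    using finite_field_fun_coeffs_eq_0 \<open>j < CARD('a)\<close> by blast
qed

lemma is_poly_rep_unique:
  fixes f :: "'p::prime_card mod_ring \<Rightarrow> 'p mod_ring \<Rightarrow> 'p mod_ring"
  assumes "is_poly_rep f lam" "is_poly_rep f lam'"
  shows "lam = lam'"
proof (intro ext)
  fix i j
  show "lam i j = lam' i j"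
  proof (cases "i < CARD('p) \<and> j < CARD('p)")
    case True
    have "(\<Sum>i<CARD('p). \<Sum>j<CARD('p). (lam i j - lam' i j) * x ^ i * y ^ j) = 0" for x y
      using assms unfolding is_poly_rep_def
      by (simp add: sum_subtractf left_diff_distrib)
    then show ?thesis
      using double_sum_coeffs_eq_0[of "\<lambda>i j. lam i j - lam' i j" i j] True by simp
  next
    case False
    then show ?thesis using assms unfolding is_poly_rep_def by (metis not_le)
  qed
qed

lemma is_poly_rep_exists:
  fixes f :: "'p::prime_card mod_ring \<Rightarrow> 'p mod_ring \<Rightarrow> 'p mod_ring"
  shows "\<exists>lam. is_poly_rep f lam"
proof -
  obtain d where d: "\<And>x y. f x y = (\<Sum>j<CARD('p). d x j * y ^ j)"
    using finite_field_fun_coeffs[of "f x" for x] by (metis CARD_mod_ring)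
  obtain e where e: "\<And>j x. d x j = (\<Sum>i<CARD('p). e j i * x ^ i)"
    using finite_field_fun_coeffs[of "\<lambda>x. d x j" for j] by (metis CARD_mod_ring)
  define lam where "lam i j = (if i < CARD('p) \<and> j < CARD('p) then e j i else 0)" for i j
  have "f x y = (\<Sum>i<CARD('p). \<Sum>j<CARD('p). lam i j * x ^ i * y ^ j)" for x y
  proof -
    have "f x y = (\<Sum>j<CARD('p). \<Sum>i<CARD('p). e j i * x ^ i * y ^ j)"
      unfolding d e by (simp add: sum_distrib_right)
    also have "\<dots> = (\<Sum>i<CARD('p). \<Sum>j<CARD('p). lam i j * x ^ i * y ^ j)"
      by (subst sum.swap) (simp add: lam_def)
    finally show ?thesis .
  qed
  then have "is_poly_rep f lam" unfolding is_poly_rep_def by (auto simp: lam_def)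
  then show ?thesis by blast
qed

lemma is_poly_rep_poly_coeffs: "is_poly_rep f (poly_coeffs f)"
  unfolding poly_coeffs_def
  using is_poly_rep_exists[of f] is_poly_rep_unique[of f] by (metis theI)

section \<open>Mixed coefficients\<close>

lemma double_sum_split_mixed:
  fixes \<mu> :: "nat \<Rightarrow> nat \<Rightarrow> 'a::comm_ring_1"
  assumes "0 < n"
  shows "(\<Sum>i<n. \<Sum>j<n. \<mu> i j * x ^ i * y ^ j) =
    (\<Sum>i\<in>{1..<n}. \<Sum>j\<in>{1..<n}. \<mu> i j * x ^ i * y ^ j) + (\<Sum>i<n. \<mu> i 0 * x ^ i) + (\<Sum>j\<in>{1..<n}. \<mu> 0 j * y ^ j)"
proof -
  have split: "(\<Sum>i<n. t i) = t 0 + (\<Sum>i\<in>{1..<n}. t i)" for t :: "nat \<Rightarrow> 'a"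
    using assms by (simp add: lessThan_atLeast0 sum.atLeast_Suc_lessThan)
  let ?T = "\<lambda>i j. \<mu> i j * x ^ i * y ^ j"
  have "(\<Sum>i<n. \<Sum>j<n. ?T i j) = (\<Sum>i<n. ?T i 0 + (\<Sum>j\<in>{1..<n}. ?T i j))"
    by (rule sum.cong[OF refl], rule split)
  also have "\<dots> = (\<Sum>i<n. ?T i 0) + (\<Sum>i<n. \<Sum>j\<in>{1..<n}. ?T i j)"
    by (rule sum.distrib)
  also have "(\<Sum>i<n. \<Sum>j\<in>{1..<n}. ?T i j) = (\<Sum>j\<in>{1..<n}. ?T 0 j) + (\<Sum>i\<in>{1..<n}. \<Sum>j\<in>{1..<n}. ?T i j)"
    by (rule split)
  finally show ?thesis by (simp add: ac_simps)
qed

lemma mixed_coeffs_zero_imp_separable: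
  fixes f :: "'p::prime_card mod_ring \<Rightarrow> 'p mod_ring \<Rightarrow> 'p mod_ring"
  assumes "\<And>i j. 1 \<le> i \<Longrightarrow> i < CARD('p) \<Longrightarrow> 1 \<le> j \<Longrightarrow> j < CARD('p) \<Longrightarrow> poly_coeffs f i j = 0"
  shows "additively_separable f"
proof -
  let ?lam = "poly_coeffs f"
  have sep: "f x y = (\<Sum>i<CARD('p). ?lam i 0 * x ^ i) + (\<Sum>j\<in>{1..<CARD('p)}. ?lam 0 j * y ^ j)" for x y
    using is_poly_rep_poly_coeffs[of f] double_sum_split_mixed[of "CARD('p)" ?lam x y] assms
    by (simp add: is_poly_rep_def)
  show ?thesis unfolding additively_separable_def by (intro exI allI) (rule sep)
qed

definition top_mixed_coeff :: "(nat \<Rightarrow> nat \<Rightarrow> 'p::prime_card mod_ring) \<Rightarrow> nat \<Rightarrow> nat \<Rightarrow> bool" where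
  "top_mixed_coeff \<mu> a b \<longleftrightarrow> \<mu> a b \<noteq> 0 \<and>
     (\<forall>i j. 1 \<le> i \<longrightarrow> i < CARD('p) \<longrightarrow> 1 \<le> j \<longrightarrow> j < CARD('p) \<longrightarrow> \<mu> i j \<noteq> 0 \<longrightarrow> i + j \<le> a + b)"

lemma Delta_attained:
  fixes f :: "'p::prime_card mod_ring \<Rightarrow> 'p mod_ring \<Rightarrow> 'p mod_ring"
  assumes "\<not> additively_separable f"
  obtains a b where "Delta f = a + b" "1 \<le> a" "a < CARD('p)" "1 \<le> b" "b < CARD('p)"
    "top_mixed_coeff (poly_coeffs f) a b"
proof -
  let ?S = "{i + j | i j. 1 \<le> i \<and> i \<le> CARD('p) - 1 \<and> 1 \<le> j \<and> j \<le> CARD('p) - 1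
                          \<and> poly_coeffs f i j \<noteq> 0}"
  have Delta: "Delta f = Max (?S \<union> {0})" unfolding Delta_def ..
  have fin: "finite (?S \<union> {0})" by (rule finite_subset[of _ "{..2 * CARD('p)}"]) auto
  have le_Delta: "i + j \<le> Delta f"
    if "1 \<le> i" "i < CARD('p)" "1 \<le> j" "j < CARD('p)" "poly_coeffs f i j \<noteq> 0" for i j
  proof -
    have "i + j \<in> ?S" using that by fastforce
    then show ?thesis unfolding Delta using fin by (intro Max_ge) auto
  qed
  obtain i j where "1 \<le> i" "i < CARD('p)" "1 \<le> j" "j < CARD('p)" "poly_coeffs f i j \<noteq> 0"
    using mixed_coeffs_zero_imp_separable assms by blast
  then have "0 < Delta f" using le_Delta by fastforce
  moreover have "Delta f \<in> ?S \<union> {0}" unfolding Delta using fin by (intro Max_in) auto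
  ultimately obtain a b where ab: "Delta f = a + b" "1 \<le> a" "a < CARD('p)" "1 \<le> b" "b < CARD('p)"
      "poly_coeffs f a b \<noteq> 0"
    by auto
  moreover have "top_mixed_coeff (poly_coeffs f) a b"
    using ab le_Delta unfolding top_mixed_coeff_def by auto
  ultimately show ?thesis by (intro that)
qed

section \<open>Finite differences\<close>

definition diff_x :: "('a::ring_1 \<Rightarrow> 'b \<Rightarrow> 'c::ab_group_add) \<Rightarrow> 'a \<Rightarrow> 'b \<Rightarrow> 'c" where
  "diff_x F x y = F (x + 1) y - F x y"

definition diff_y :: "('a \<Rightarrow> 'b::ring_1 \<Rightarrow> 'c::ab_group_add) \<Rightarrow> 'a \<Rightarrow> 'b \<Rightarrow> 'c" where
  "diff_y F x y = F x (y + 1) - F x y"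

lemma diff_y_swap: "diff_y F = (\<lambda>x y. diff_x (\<lambda>u v. F v u) y x)"
  by (simp add: diff_x_def diff_y_def fun_eq_iff)

definition has_poly_coeffs ::
  "('p::prime_card mod_ring \<Rightarrow> 'p mod_ring \<Rightarrow> 'p mod_ring) \<Rightarrow> (nat \<Rightarrow> nat \<Rightarrow> 'p mod_ring) \<Rightarrow> bool" where
  "has_poly_coeffs F \<mu> \<longleftrightarrow> (\<forall>x y. F x y = (\<Sum>i<CARD('p). \<Sum>j<CARD('p). \<mu> i j * x ^ i * y ^ j))"

lemma has_poly_coeffs_poly_coeffs: "has_poly_coeffs f (poly_coeffs f)"
  using is_poly_rep_poly_coeffs[of f] by (simp add: is_poly_rep_def has_poly_coeffs_def)

lemma has_poly_coeffs_swap: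
  fixes F :: "'p::prime_card mod_ring \<Rightarrow> 'p mod_ring \<Rightarrow> 'p mod_ring"
  assumes "has_poly_coeffs F \<mu>"
  shows "has_poly_coeffs (\<lambda>x y. F y x) (\<lambda>i j. \<mu> j i)"
  unfolding has_poly_coeffs_def
proof (intro allI)
  fix x y :: "'p mod_ring"
  have "F y x = (\<Sum>i<CARD('p). \<Sum>j<CARD('p). \<mu> i j * y ^ i * x ^ j)"
    using assms unfolding has_poly_coeffs_def by blast
  also have "\<dots> = (\<Sum>i<CARD('p). \<Sum>j<CARD('p). \<mu> j i * x ^ i * y ^ j)"
    by (subst sum.swap) (simp add: ac_simps)
  finally show "F y x = \<dots>" .
qed

lemma top_mixed_coeffD:
  fixes \<mu> :: "nat \<Rightarrow> nat \<Rightarrow> 'p::prime_card mod_ring"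
  assumes "top_mixed_coeff \<mu> a b" "1 \<le> i" "i < CARD('p)" "1 \<le> j" "j < CARD('p)" "\<mu> i j \<noteq> 0"
  shows "i + j \<le> a + b"
proof -
  have "\<forall>i j. 1 \<le> i \<longrightarrow> i < CARD('p) \<longrightarrow> 1 \<le> j \<longrightarrow> j < CARD('p) \<longrightarrow> \<mu> i j \<noteq> 0 \<longrightarrow> i + j \<le> a + b"
    using assms(1) unfolding top_mixed_coeff_def by (rule conjunct2)
  with assms(2-6) show ?thesis by blast
qed

lemma top_mixed_coeff_swap:
  fixes \<mu> :: "nat \<Rightarrow> nat \<Rightarrow> 'p::prime_card mod_ring"
  assumes "top_mixed_coeff \<mu> a b"
  shows "top_mixed_coeff (\<lambda>i j. \<mu> j i) b a"
  unfolding top_mixed_coeff_def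
proof (intro conjI allI impI)
  show "\<mu> a b \<noteq> 0" using assms by (simp add: top_mixed_coeff_def)
  fix i j assume "1 \<le> i" "i < CARD('p)" "1 \<le> j" "j < CARD('p)" "\<mu> j i \<noteq> 0"
  then show "i + j \<le> b + a" using top_mixed_coeffD[OF assms, of j i] by simp
qed

definition diff_x_coeffs :: "(nat \<Rightarrow> nat \<Rightarrow> 'p::prime_card mod_ring) \<Rightarrow> nat \<Rightarrow> nat \<Rightarrow> 'p mod_ring" where
  "diff_x_coeffs \<mu> k j = (\<Sum>i\<in>{Suc k..<CARD('p)}. of_nat (i choose k) * \<mu> i j)"

definition diff_y_coeffs :: "(nat \<Rightarrow> nat \<Rightarrow> 'p::prime_card mod_ring) \<Rightarrow> nat \<Rightarrow> nat \<Rightarrow> 'p mod_ring" where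
  "diff_y_coeffs \<mu> = (\<lambda>i j. diff_x_coeffs (\<lambda>i j. \<mu> j i) j i)"

lemma power_add_1_diff:
  fixes x :: "'a::comm_ring_1"
  shows "(x + 1) ^ i - x ^ i = (\<Sum>k<i. of_nat (i choose k) * x ^ k)"
proof -
  have "(x + 1) ^ i = (\<Sum>k<Suc i. of_nat (i choose k) * x ^ k)"
    by (simp add: binomial_ring lessThan_Suc_atMost)
  then show ?thesis by simp
qed

lemma sum_triangle_swap: "(\<Sum>i<n. \<Sum>k<i. a i k) = (\<Sum>k<n. \<Sum>i\<in>{Suc k..<n}. a i k)"
  by (induction n) (simp_all add: sum.distrib)

lemma has_poly_coeffs_diff_x:
  fixes F :: "'p::prime_card mod_ring \<Rightarrow> 'p mod_ring \<Rightarrow> 'p mod_ring"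
  assumes "has_poly_coeffs F \<mu>"
  shows "has_poly_coeffs (diff_x F) (diff_x_coeffs \<mu>)"
  unfolding has_poly_coeffs_def
proof (intro allI)
  fix x y :: "'p mod_ring"
  let ?N = "CARD('p)"
  let ?T = "\<lambda>i j k. of_nat (i choose k) * \<mu> i j * x ^ k * y ^ j"
  have "diff_x F x y = (\<Sum>i<?N. \<Sum>j<?N. \<mu> i j * ((x + 1) ^ i - x ^ i) * y ^ j)"
    using assms unfolding has_poly_coeffs_def diff_x_def
    by (simp add: sum_subtractf[symmetric] algebra_simps)
  also have "\<dots> = (\<Sum>i<?N. \<Sum>j<?N. \<Sum>k<i. ?T i j k)"
    unfolding power_add_1_diff sum_distrib_left sum_distrib_right by (simp add: mult_ac)
  also have "\<dots> = (\<Sum>i<?N. \<Sum>k<i. \<Sum>j<?N. ?T i j k)"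
    by (rule sum.cong[OF refl sum.swap])
  also have "\<dots> = (\<Sum>k<?N. \<Sum>i\<in>{Suc k..<?N}. \<Sum>j<?N. ?T i j k)"
    by (rule sum_triangle_swap)
  also have "\<dots> = (\<Sum>k<?N. \<Sum>j<?N. \<Sum>i\<in>{Suc k..<?N}. ?T i j k)"
    by (rule sum.cong[OF refl sum.swap])
  also have "\<dots> = (\<Sum>k<?N. \<Sum>j<?N. diff_x_coeffs \<mu> k j * x ^ k * y ^ j)"
    by (simp add: diff_x_coeffs_def sum_distrib_right)
  finally show "diff_x F x y = \<dots>" .
qed

lemma has_poly_coeffs_diff_y:
  assumes "has_poly_coeffs F \<mu>"
  shows "has_poly_coeffs (diff_y F) (diff_y_coeffs \<mu>)"
  unfolding diff_y_swap diff_y_coeffs_def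
  by (rule has_poly_coeffs_swap, rule has_poly_coeffs_diff_x, rule has_poly_coeffs_swap[OF assms])

lemma of_nat_mod_ring_neq_0:
  assumes "0 < n" "n < CARD('p)"
  shows "(of_nat n :: 'p::prime_card mod_ring) \<noteq> 0"
proof
  assume "(of_nat n :: 'p mod_ring) = 0"
  then have "CARD('p) dvd n" by (simp add: of_nat_eq_0_iff_char_dvd)
  with assms show False by (auto dest: dvd_imp_le)
qed

lemma top_mixed_coeff_diff_x:
  fixes \<mu> :: "nat \<Rightarrow> nat \<Rightarrow> 'p::prime_card mod_ring"
  assumes top: "top_mixed_coeff \<mu> a b" and a: "2 \<le> a" "a < CARD('p)" and b: "1 \<le> b" "b < CARD('p)"
  shows "top_mixed_coeff (diff_x_coeffs \<mu>) (a - 1) b"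
  unfolding top_mixed_coeff_def
proof (intro conjI allI impI)
  have above_zero: "\<mu> i b = 0" if "a < i" "i < CARD('p)" for i
  proof (rule ccontr)
    assume "\<mu> i b \<noteq> 0"
    then have "i + b \<le> a + b" using top_mixed_coeffD[OF top, of i b] that a b by simp
    with \<open>a < i\<close> show False by simp
  qed
  have "diff_x_coeffs \<mu> (a - 1) b = (\<Sum>i\<in>{a..<CARD('p)}. of_nat (i choose (a - 1)) * \<mu> i b)"
    using a by (simp add: diff_x_coeffs_def)
  also have "\<dots> = of_nat (a choose (a - 1)) * \<mu> a b + (\<Sum>i\<in>{Suc a..<CARD('p)}. of_nat (i choose (a - 1)) * \<mu> i b)"
    using a by (simp only: sum.atLeast_Suc_lessThan)
  also have "\<dots> = of_nat a * \<mu> a b"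
    using a above_zero by (cases a) simp_all
  finally show "diff_x_coeffs \<mu> (a - 1) b \<noteq> 0"
    using top a of_nat_mod_ring_neq_0[of a] unfolding top_mixed_coeff_def by simp
next
  fix k j assume "1 \<le> k" "k < CARD('p)" "1 \<le> j" "j < CARD('p)" "diff_x_coeffs \<mu> k j \<noteq> 0"
  then obtain i where "i \<in> {Suc k..<CARD('p)}" "\<mu> i j \<noteq> 0"
    unfolding diff_x_coeffs_def by (auto elim: sum.not_neutral_contains_not_neutral)
  with top_mixed_coeffD[OF top, of i j] \<open>1 \<le> j\<close> \<open>j < CARD('p)\<close> show "k + j \<le> a - 1 + b"
    by auto
qed

lemma top_mixed_coeff_diff_y:
  fixes \<mu> :: "nat \<Rightarrow> nat \<Rightarrow> 'p::prime_card mod_ring"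
  assumes "top_mixed_coeff \<mu> a b" "1 \<le> a" "a < CARD('p)" "2 \<le> b" "b < CARD('p)"
  shows "top_mixed_coeff (diff_y_coeffs \<mu>) a (b - 1)"
proof -
  have "top_mixed_coeff (\<lambda>i j. \<mu> j i) b a"
    using assms(1) by (rule top_mixed_coeff_swap)
  then have "top_mixed_coeff (diff_x_coeffs (\<lambda>i j. \<mu> j i)) (b - 1) a"
    using assms by (intro top_mixed_coeff_diff_x) auto
  then show ?thesis
    unfolding diff_y_coeffs_def by (rule top_mixed_coeff_swap)
qed

lemma has_poly_coeffs_iterated_diff:
  assumes "has_poly_coeffs F \<mu>"
  shows "has_poly_coeffs ((diff_x ^^ s) ((diff_y ^^ t) F)) ((diff_x_coeffs ^^ s) ((diff_y_coeffs ^^ t) \<mu>))"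
proof -
  have "has_poly_coeffs ((diff_y ^^ t) F) ((diff_y_coeffs ^^ t) \<mu>)"
    by (induction t) (simp_all add: assms has_poly_coeffs_diff_y)
  then show ?thesis
    by (induction s) (simp_all add: has_poly_coeffs_diff_x)
qed

lemma top_mixed_coeff_iterated_diff:
  fixes \<mu> :: "nat \<Rightarrow> nat \<Rightarrow> 'p::prime_card mod_ring"
  assumes top: "top_mixed_coeff \<mu> a b" and a: "1 \<le> a" "a < CARD('p)" and b: "1 \<le> b" "b < CARD('p)"
  shows "top_mixed_coeff ((diff_x_coeffs ^^ (a - 1)) ((diff_y_coeffs ^^ (b - 1)) \<mu>)) 1 1"
proof -
  have y: "top_mixed_coeff ((diff_y_coeffs ^^ t) \<mu>) a (b - t)" if "t < b" for t
    using that
  proof (induction t)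
    case (Suc t)
    then have "top_mixed_coeff (diff_y_coeffs ((diff_y_coeffs ^^ t) \<mu>)) a (b - t - 1)"
      using a b by (intro top_mixed_coeff_diff_y) auto
    then show ?case by simp
  qed (simp add: top)
  have "top_mixed_coeff ((diff_x_coeffs ^^ s) ((diff_y_coeffs ^^ (b - 1)) \<mu>)) (a - s) 1"
    if "s < a" for s
    using that
  proof (induction s)
    case (Suc s)
    then have "top_mixed_coeff (diff_x_coeffs ((diff_x_coeffs ^^ s) ((diff_y_coeffs ^^ (b - 1)) \<mu>))) (a - s - 1) 1"
      using a b by (intro top_mixed_coeff_diff_x) auto
    then show ?case by simp
  qed (use y[of "b - 1"] b in simp)
  from this[of "a - 1"] show ?thesis using a by simp
qed

lemma top_mixed_coeff_1_1_bilinear: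
  fixes G :: "'p::prime_card mod_ring \<Rightarrow> 'p mod_ring \<Rightarrow> 'p mod_ring"
  assumes coeffs: "has_poly_coeffs G \<nu>" and top: "top_mixed_coeff \<nu> 1 1"
  shows "G x y = \<nu> 1 1 * x * y + (\<Sum>i<CARD('p). \<nu> i 0 * x ^ i) + (\<Sum>j\<in>{1..<CARD('p)}. \<nu> 0 j * y ^ j)"
proof -
  let ?N = "CARD('p)"
  have N: "2 \<le> ?N" using card_finite_field_ge_2[where 'a="'p mod_ring"] by simp
  have "\<nu> i j * x ^ i * y ^ j = (if j = 1 then if i = 1 then \<nu> 1 1 * x * y else 0 else 0)"
    if "i \<in> {1..<?N}" "j \<in> {1..<?N}" for i j
    using top_mixed_coeffD[OF top, of i j] that by (cases "i = 1 \<and> j = 1") auto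
  then have "(\<Sum>i\<in>{1..<?N}. \<Sum>j\<in>{1..<?N}. \<nu> i j * x ^ i * y ^ j)
      = (\<Sum>i\<in>{1..<?N}. \<Sum>j\<in>{1..<?N}. if j = 1 then if i = 1 then \<nu> 1 1 * x * y else 0 else 0)"
    by (intro sum.cong refl)
  also have "\<dots> = \<nu> 1 1 * x * y" using N by simp
  finally show ?thesis
    using coeffs double_sum_split_mixed[of ?N \<nu> x y] N unfolding has_poly_coeffs_def by simp
qed

section \<open>Combinations of translates\<close>

definition is_translate_comb :: "nat \<Rightarrow> ('a::comm_ring_1 \<Rightarrow> 'a \<Rightarrow> 'a) \<Rightarrow> ('a \<Rightarrow> 'a \<Rightarrow> 'a) \<Rightarrow> bool" where
  "is_translate_comb k f G \<longleftrightarrow> (\<exists>L. length L = k \<and> (\<forall>(c, u, v) \<in> set L. c \<noteq> 0) \<and>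
     (\<forall>x y. G x y = (\<Sum>(c, u, v)\<leftarrow>L. c * f (x + u) (y + v))))"

lemma is_translate_comb_self: "is_translate_comb 1 f f"
  unfolding is_translate_comb_def by (intro exI[of _ "[(1, 0, 0)]"]) simp

lemma is_translate_comb_shift_diff:
  assumes "is_translate_comb k f G"
  shows "is_translate_comb (2 * k) f (\<lambda>x y. G (x + d) (y + e) - G x y)"
proof -
  obtain L where L: "length L = k" "\<forall>(c, u, v) \<in> set L. c \<noteq> 0"
    and G: "\<And>x y. G x y = (\<Sum>(c, u, v)\<leftarrow>L. c * f (x + u) (y + v))"
    using assms unfolding is_translate_comb_def by blast
  define L' where "L' = map (\<lambda>(c, u, v). (c, u + d, v + e)) L @ map (\<lambda>(c, u, v). (- c, u, v)) L"
  have "(\<Sum>(c, u, v)\<leftarrow>L'. c * f (x + u) (y + v)) = G (x + d) (y + e) - G x y" for x y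
    unfolding G L'_def by (induction L) (auto simp: algebra_simps)
  moreover have "length L' = 2 * k" "\<forall>(c, u, v) \<in> set L'. c \<noteq> 0"
    using L by (auto simp: L'_def)
  ultimately show ?thesis unfolding is_translate_comb_def by metis
qed

lemma is_translate_comb_diff_x:
  assumes "is_translate_comb k f G"
  shows "is_translate_comb (2 * k) f (diff_x G)"
proof -
  have "diff_x G = (\<lambda>x y. G (x + 1) (y + 0) - G x y)" by (simp add: diff_x_def fun_eq_iff)
  with is_translate_comb_shift_diff[OF assms] show ?thesis by metis
qed

lemma is_translate_comb_diff_y:
  assumes "is_translate_comb k f G"
  shows "is_translate_comb (2 * k) f (diff_y G)"
proof -
  have "diff_y G = (\<lambda>x y. G (x + 0) (y + 1) - G x y)" by (simp add: diff_y_def fun_eq_iff)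
  with is_translate_comb_shift_diff[OF assms] show ?thesis by metis
qed

lemma is_translate_comb_iterated_diff:
  "is_translate_comb (2 ^ (s + t)) f ((diff_x ^^ s) ((diff_y ^^ t) f))"
proof -
  have "is_translate_comb (2 ^ t) f ((diff_y ^^ t) f)"
    by (induction t) (use is_translate_comb_self in \<open>simp_all add: is_translate_comb_diff_y\<close>)
  then show ?thesis
    by (induction s) (simp_all add: is_translate_comb_diff_x)
qed

lemma is_translate_combE:
  assumes "is_translate_comb k f G"
  obtains c u v where "\<forall>i<k. c i \<noteq> 0" "\<And>x y. G x y = (\<Sum>i<k. c i * f (x + u i) (y + v i))"
proof -
  obtain L where L: "length L = k" "\<forall>(c, u, v) \<in> set L. c \<noteq> 0"
    and G: "\<And>x y. G x y = (\<Sum>(c, u, v)\<leftarrow>L. c * f (x + u) (y + v))"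
    using assms unfolding is_translate_comb_def by blast
  show ?thesis
  proof (rule that[of "\<lambda>i. fst (L ! i)" "\<lambda>i. fst (snd (L ! i))" "\<lambda>i. snd (snd (L ! i))"])
    show "\<forall>i<k. fst (L ! i) \<noteq> 0"
    proof (intro allI impI)
      fix i assume "i < k"
      then have "L ! i \<in> set L" using L(1) by simp
      with L(2) show "fst (L ! i) \<noteq> 0" by (cases "L ! i") auto
    qed
    show "G x y = (\<Sum>i<k. fst (L ! i) * f (x + fst (snd (L ! i))) (y + snd (snd (L ! i))))" for x y
      unfolding G sum_list_sum_nth atLeast0LessThan L(1)[symmetric] by (simp add: split_def)
  qed
qed

section \<open>Simulating PR_p\<close>

lemma sum_PiE_lessThan_Suc:
  fixes G :: "(nat \<Rightarrow> 'a) \<Rightarrow> 'b::comm_monoid_add"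
  shows "(\<Sum>av\<in>PiE {..<Suc k} (\<lambda>_. A). G av) = (\<Sum>v\<in>A. \<Sum>av\<in>PiE {..<k} (\<lambda>_. A). G (av(k := v)))"
proof -
  have PiE: "PiE {..<Suc k} (\<lambda>_. A) = (\<lambda>(v, av). av(k := v)) ` (A \<times> PiE {..<k} (\<lambda>_. A))"
    using PiE_insert_eq[of k "{..<k}" "\<lambda>_. A"] by (simp add: lessThan_Suc)
  have "inj_on (\<lambda>(v, av). av(k := v)) (A \<times> PiE {..<k} (\<lambda>_. A))"
    using inj_combinator[of k "{..<k}" "\<lambda>_. A"] by simp
  then show ?thesis
    unfolding PiE by (simp add: sum.reindex sum.cartesian_product split_def)
qed

definition linear_readout_prob ::
  "nat \<Rightarrow> (nat \<Rightarrow> 'p::prime_card mod_ring) \<Rightarrow> (nat \<Rightarrow> 'p mod_ring) \<Rightarrow> 'p mod_ring \<Rightarrow> 'p mod_ring \<Rightarrow> real" where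
  "linear_readout_prob k c w A B =
    (\<Sum>av\<in>PiE {..<k} (\<lambda>_. UNIV). \<Sum>bv\<in>PiE {..<k} (\<lambda>_. UNIV).
      (\<Prod>i<k. if av i - bv i = w i then 1 / real CARD('p) else 0) *
      (if (\<Sum>i<k. c i * av i) = A \<and> (\<Sum>i<k. c i * bv i) = B then 1 else 0))"

lemma linear_readout_prob_0: "linear_readout_prob 0 c w A B = (if A = 0 \<and> B = 0 then 1 else 0)"
  by (simp add: linear_readout_prob_def)

lemma linear_readout_prob_Suc:
  fixes c w :: "nat \<Rightarrow> 'p::prime_card mod_ring"
  shows "linear_readout_prob (Suc k) c w A B =
    (\<Sum>v\<in>UNIV. linear_readout_prob k c w (A - c k * v) (B - c k * (v - w k))) / real CARD('p)"
proof -
  let ?p = "real CARD('p)"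
  let ?T = "\<lambda>v v'. if v - v' = w k then 1 / ?p else 0"
  let ?P = "\<lambda>av bv. \<Prod>i<k. if av i - bv i = w i then 1 / ?p else 0"
  let ?I = "\<lambda>av bv v v'. if (\<Sum>i<k. c i * av i) = A - c k * v \<and> (\<Sum>i<k. c i * bv i) = B - c k * v'
                          then 1 else (0::real)"
  have split_last:
    "(\<Prod>i<Suc k. if (av(k := v)) i - (bv(k := v')) i = w i then 1 / ?p else 0) *
     (if (\<Sum>i<Suc k. c i * (av(k := v)) i) = A \<and> (\<Sum>i<Suc k. c i * (bv(k := v')) i) = B then 1 else 0)
     = ?T v v' * (?P av bv * ?I av bv v v')" for av bv v v'
    by (simp add: prod.lessThan_Suc sum.lessThan_Suc eq_diff_eq)
  have "linear_readout_prob (Suc k) c w A B =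
      (\<Sum>v\<in>UNIV. \<Sum>av\<in>PiE {..<k} (\<lambda>_. UNIV). \<Sum>v'\<in>UNIV. \<Sum>bv\<in>PiE {..<k} (\<lambda>_. UNIV).
        ?T v v' * (?P av bv * ?I av bv v v'))"
    unfolding linear_readout_prob_def sum_PiE_lessThan_Suc split_last ..
  also have "\<dots> = (\<Sum>v\<in>UNIV. \<Sum>v'\<in>UNIV. ?T v v' * linear_readout_prob k c w (A - c k * v) (B - c k * v'))"
    unfolding linear_readout_prob_def sum_distrib_left by (intro sum.cong refl sum.swap)
  also have "\<dots> = (\<Sum>v\<in>UNIV. linear_readout_prob k c w (A - c k * v) (B - c k * (v - w k)) / ?p)"
  proof (intro sum.cong refl)
    fix v
    let ?L = "\<lambda>v'. linear_readout_prob k c w (A - c k * v) (B - c k * v')"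
    have "?T v v' * ?L v' = (if v' = v - w k then ?L v' / ?p else 0)" for v'
      by (auto simp: algebra_simps)
    then show "(\<Sum>v'\<in>UNIV. ?T v v' * ?L v') = ?L (v - w k) / ?p"
      by simp
  qed
  finally show ?thesis by (simp add: sum_divide_distrib)
qed

lemma linear_readout_prob_eq:
  fixes c w :: "nat \<Rightarrow> 'p::prime_card mod_ring"
  assumes "0 < k" "\<forall>i<k. c i \<noteq> 0"
  shows "linear_readout_prob k c w A B = (if A - B = (\<Sum>i<k. c i * w i) then 1 / real CARD('p) else 0)"
  using assms
proof (induction k arbitrary: A B rule: nat_induct_non_zero)
  case 1
  then have "A - c 0 * v = 0 \<and> B - c 0 * (v - w 0) = 0 \<longleftrightarrow> v = A / c 0 \<and> A - B = c 0 * w 0" for v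
    by (auto simp: field_simps)
  then show ?case
    by (simp add: linear_readout_prob_Suc linear_readout_prob_0 if_distrib cong: if_cong)
next
  case (Suc k)
  have "(A - c k * v) - (B - c k * (v - w k)) = (\<Sum>i<k. c i * w i) \<longleftrightarrow> A - B = (\<Sum>i<Suc k. c i * w i)"
    for v
    by (auto simp: algebra_simps)
  with Suc show ?case
    by (simp add: linear_readout_prob_Suc)
qed

lemma simulates_PR_box_of_translates:
  fixes f :: "'p::prime_card mod_ring \<Rightarrow> 'p mod_ring \<Rightarrow> 'p mod_ring"
  assumes "0 < k" and c: "\<forall>i<k. c i \<noteq> 0"
    and readout: "\<And>x y. (\<Sum>i<k. c i * f (x + u i) (y + v i)) = x * y + g x + h y"
  shows "simulates_with k (functional_box f) PR_box"
proof -
  have sim: "PR_box a b x y =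
      (\<Sum>av\<in>PiE {..<k} (\<lambda>_. UNIV). \<Sum>bv\<in>PiE {..<k} (\<lambda>_. UNIV).
         (\<Prod>i<k. functional_box f (av i) (bv i) (x + u i) (y + v i)) *
         (if (\<Sum>i<k. c i * av i) - g x = a \<and> (\<Sum>i<k. c i * bv i) + h y = b then 1 else 0))"
    for a b x y
  proof -
    let ?w = "\<lambda>i. f (x + u i) (y + v i)"
    have outputs: "((\<Sum>i<k. c i * av i) - g x = a \<and> (\<Sum>i<k. c i * bv i) + h y = b) \<longleftrightarrow>
        ((\<Sum>i<k. c i * av i) = a + g x \<and> (\<Sum>i<k. c i * bv i) = b - h y)" for av bv
      by (simp add: diff_eq_eq eq_diff_eq)
    have difference: "(a + g x) - (b - h y) = (\<Sum>i<k. c i * ?w i) \<longleftrightarrow> a - b = x * y"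
      unfolding readout by (auto simp: algebra_simps)
    have "(\<Sum>av\<in>PiE {..<k} (\<lambda>_. UNIV). \<Sum>bv\<in>PiE {..<k} (\<lambda>_. UNIV).
         (\<Prod>i<k. functional_box f (av i) (bv i) (x + u i) (y + v i)) *
         (if (\<Sum>i<k. c i * av i) - g x = a \<and> (\<Sum>i<k. c i * bv i) + h y = b then 1 else 0))
        = linear_readout_prob k c ?w (a + g x) (b - h y)"
      unfolding linear_readout_prob_def functional_box_def outputs ..
    also have "\<dots> = PR_box a b x y"
      unfolding linear_readout_prob_eq[OF \<open>0 < k\<close> c] difference PR_box_def ..
    finally show ?thesis by (rule sym)
  qed
  show ?thesis
    unfolding simulates_with_def
    by (intro exI[of _ "\<lambda>x i. x + u i"] exI[of _ "\<lambda>y i. y + v i"]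
        exI[of _ "\<lambda>x av. (\<Sum>i<k. c i * av i) - g x"] exI[of _ "\<lambda>y bv. (\<Sum>i<k. c i * bv i) + h y"]
        allI) (rule sim)
qed

lemma simulates_PR_box_by_translate_comb:
  fixes f G :: "'p::prime_card mod_ring \<Rightarrow> 'p mod_ring \<Rightarrow> 'p mod_ring"
  assumes comb: "is_translate_comb k f G" and "0 < k" and "m \<noteq> 0"
    and G: "\<And>x y. G x y = m * x * y + g x + h y"
  shows "simulates_with k (functional_box f) PR_box"
proof -
  obtain c u v where c: "\<forall>i<k. c i \<noteq> 0"
    and G_sum: "\<And>x y. G x y = (\<Sum>i<k. c i * f (x + u i) (y + v i))"
    using is_translate_combE[OF comb] by blast
  show ?thesis
  proof (rule simulates_PR_box_of_translates[where c = "\<lambda>i. c i / m" and u = u and v = v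
        and g = "\<lambda>x. g x / m" and h = "\<lambda>y. h y / m"])
    show "0 < k" "\<forall>i<k. c i / m \<noteq> 0" using \<open>0 < k\<close> c \<open>m \<noteq> 0\<close> by simp_all
    fix x y
    have "(\<Sum>i<k. c i / m * f (x + u i) (y + v i)) = G x y / m"
      unfolding G_sum by (simp add: sum_divide_distrib)
    also have "\<dots> = m * x * y / m + g x / m + h y / m"
      unfolding G by (simp only: add_divide_distrib)
    also have "\<dots> = x * y + g x / m + h y / m"
      using \<open>m \<noteq> 0\<close> by (simp add: mult.assoc)
    finally show "(\<Sum>i<k. c i / m * f (x + u i) (y + v i)) = x * y + g x / m + h y / m" .
  qed
qed

theorem mainTheorem3:
  fixes f :: "'p::prime_card mod_ring \<Rightarrow> 'p mod_ring \<Rightarrow> 'p mod_ring"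
  assumes "\<not> additively_separable f"
  shows "Delta f \<ge> 2 \<and> simulates_with (2 ^ (Delta f - 2)) (functional_box f) PR_box"
proof -
  obtain a b where Delta: "Delta f = a + b" and ab: "1 \<le> a" "a < CARD('p)" "1 \<le> b" "b < CARD('p)"
    and top: "top_mixed_coeff (poly_coeffs f) a b"
    by (rule Delta_attained[OF assms])
  define G where "G = (diff_x ^^ (a - 1)) ((diff_y ^^ (b - 1)) f)"
  define \<nu> where "\<nu> = (diff_x_coeffs ^^ (a - 1)) ((diff_y_coeffs ^^ (b - 1)) (poly_coeffs f))"
  have coeffs_\<nu>: "has_poly_coeffs G \<nu>"
    unfolding G_def \<nu>_def by (rule has_poly_coeffs_iterated_diff[OF has_poly_coeffs_poly_coeffs])
  have top_\<nu>: "top_mixed_coeff \<nu> 1 1"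
    unfolding \<nu>_def by (rule top_mixed_coeff_iterated_diff[OF top ab])
  have "Delta f - 2 = (a - 1) + (b - 1)" using Delta ab by simp
  then have comb: "is_translate_comb (2 ^ (Delta f - 2)) f G"
    unfolding G_def by (simp only: is_translate_comb_iterated_diff)
  have m: "\<nu> 1 1 \<noteq> 0" using top_\<nu> unfolding top_mixed_coeff_def by (rule conjunct1)
  have "simulates_with (2 ^ (Delta f - 2)) (functional_box f) PR_box"
    by (rule simulates_PR_box_by_translate_comb[OF comb _ m top_mixed_coeff_1_1_bilinear[OF coeffs_\<nu> top_\<nu>]])
      simp
  with Delta ab show ?thesis by simp
qed

end
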